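(* Let $G$ be a metrizable topological group. The following assertions are equivalent: (a) $G$ is separable; (b) $G$ is CCC; (c) $G$ is $\aleph_0$-bounded; (d) $C(G)$ has the countable sup property.
   Context: $G$ is CCC if every family of pairwise disjoint open subsets of $G$ is countable. $G$ is $\aleph_0$-bounded if for every nonempty open set $U\subseteq G$ there is a countable set $S\subseteq G$ with $G=U\cdot S=\bigcup_{s\in S}Us$. $C(G)$ is the vector lattice of real-valued continuous functions on $G$ with the pointwise order; a vector lattice has the countable sup property if every nonempty subset possessing a supremum contains a countable subset with the same supremum. *)

theory Defs
  imports "HOL-Analysis.Analysis" "HOL-Algebra.Group"
begin

definition topological_group :: "('a, 'b) monoid_scheme \<Rightarrow> 'a topology \<Rightarrow> bool" where
  "topological_group G X \<longleftrightarrow>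
     group G \<and> carrier G = topspace X \<and>
     continuous_map (prod_topology X X) X (\<lambda>(x, y). x \<otimes>\<^bsub>G\<^esub> y) \<and>
     continuous_map X X (\<lambda>x. inv\<^bsub>G\<^esub> x)"

definition ccc_space :: "'a topology \<Rightarrow> bool" where
  "ccc_space X \<longleftrightarrow>
     (\<forall>\<F>. (\<forall>U\<in>\<F>. openin X U) \<and> pairwise disjnt \<F> \<longrightarrow> countable \<F>)"

definition aleph0_bounded :: "('a, 'b) monoid_scheme \<Rightarrow> 'a topology \<Rightarrow> bool" where
  "aleph0_bounded G X \<longleftrightarrow>
     (\<forall>U. openin X U \<and> U \<noteq> {} \<longrightarrow>
        (\<exists>S. S \<subseteq> carrier G \<and> countable S \<and>
             carrier G = (\<Union>s\<in>S. (\<lambda>u. u \<otimes>\<^bsub>G\<^esub> s) ` U)))"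

text \<open>To make the pointwise order a genuine
partial order, functions are taken extensional (zero outside topspace X); the order is the
pointwise order of HOL functions.\<close>
definition cont_funs :: "'a topology \<Rightarrow> ('a \<Rightarrow> real) set" where
  "cont_funs X = {f. continuous_map X euclideanreal f \<and> (\<forall>x. x \<notin> topspace X \<longrightarrow> f x = 0)}"

definition is_sup_in_C :: "'a topology \<Rightarrow> ('a \<Rightarrow> real) set \<Rightarrow> ('a \<Rightarrow> real) \<Rightarrow> bool" where
  "is_sup_in_C X A s \<longleftrightarrow>
     s \<in> cont_funs X \<and> (\<forall>f\<in>A. f \<le> s) \<and>
     (\<forall>g\<in>cont_funs X. (\<forall>f\<in>A. f \<le> g) \<longrightarrow> s \<le> g)"

definition countable_sup_property :: "'a topology \<Rightarrow> bool" where
  "countable_sup_property X \<longleftrightarrow>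
     (\<forall>A s. A \<subseteq> cont_funs X \<and> A \<noteq> {} \<and> is_sup_in_C X A s \<longrightarrow>
        (\<exists>B. B \<subseteq> A \<and> countable B \<and> is_sup_in_C X B s))"

end

theory Submission
  imports Defs
begin

text \<open>In a metric space, separability gives a countable base, and CCC gives separability: the
balls of radius \<open>\<epsilon>/2\<close> around a maximal \<open>\<epsilon>\<close>-separated set are pairwise disjoint, so each such
set is countable, and their union over \<open>\<epsilon> = 1/(n+1)\<close> is dense.

With a countable base, an upper bound of countably many members of a family \<open>A \<subseteq> C(X)\<close> (one
for each basic open set and rational level it exceeds) already bounds all of \<open>A\<close>; this gives
the countable sup property. Conversely, for a disjoint open family \<open>\<F>\<close>, the \<open>[0,1]\<close>-valued
bumps supported in members of \<open>\<F>\<close> or in the interior of the complement of \<open>\<Union>\<F>\<close> have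
supremum 1; a countable subfamily with the same supremum has a member with support meeting
each nonempty set of \<open>\<F>\<close>, so \<open>\<F>\<close> is countable.

In the group, a countable base makes \<open>G\<close> Lindelof, and the open cover by the right
translates \<open>U s\<close> of a nonempty open \<open>U\<close> has a countable subcover. Conversely, if each basic
neighbourhood \<open>V\<close> of \<open>1\<close> satisfies \<open>G = V S\<^sub>V\<close> with \<open>S\<^sub>V\<close> countable, then \<open>\<Union>\<^sub>V S\<^sub>V\<close> is dense.\<close>

section \<open>Separability and the countable chain condition\<close>

lemma countable_family_with_unique_witnesses:
  assumes "countable C"
    and witness: "\<And>U. U \<in> \<U> \<Longrightarrow> U \<noteq> {} \<Longrightarrow> \<exists>c\<in>C. R c U"
    and unique: "\<And>c U V. c \<in> C \<Longrightarrow> U \<in> \<U> \<Longrightarrow> V \<in> \<U> \<Longrightarrow> R c U \<Longrightarrow> R c V \<Longrightarrow> U = V"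
  shows "countable \<U>"
proof -
  define W where "W c = (SOME U. U \<in> \<U> \<and> R c U)" for c
  have "U \<in> W ` C" if U: "U \<in> \<U>" "U \<noteq> {}" for U
  proof -
    obtain c where c: "c \<in> C" "R c U" using witness U by blast
    then have "\<exists>V. V \<in> \<U> \<and> R c V" using U by blast
    then have "W c \<in> \<U> \<and> R c (W c)" unfolding W_def by (rule someI_ex)
    then have "W c = U" using unique[OF c(1) _ U(1)] c(2) by blast
    then show ?thesis using c(1) by blast
  qed
  then have "\<U> \<subseteq> insert {} (W ` C)" by blast
  moreover have "countable (insert {} (W ` C))" using \<open>countable C\<close> by simp
  ultimately show ?thesis by (rule countable_subset)
qed

lemma ccc_spaceD:
  assumes "ccc_space X" "\<And>U. U \<in> \<F> \<Longrightarrow> openin X U" "pairwise disjnt \<F>"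
  shows "countable \<F>"
  using assms unfolding ccc_space_def by blast

lemma separable_imp_ccc_space:
  assumes "separable_space X" shows "ccc_space X"
  unfolding ccc_space_def
proof clarify
  fix \<F> assume open_\<F>: "\<forall>U\<in>\<F>. openin X U" and disj: "pairwise disjnt \<F>"
  obtain C where "countable C" and dense: "\<forall>T. openin X T \<and> T \<noteq> {} \<longrightarrow> C \<inter> T \<noteq> {}"
    using assms unfolding separable_space_def dense_intersects_open by blast
  show "countable \<F>"
  proof (rule countable_family_with_unique_witnesses[where R = "(\<in>)"])
    show "\<exists>c\<in>C. c \<in> U" if "U \<in> \<F>" "U \<noteq> {}" for U
      using dense open_\<F> that by blast
    show "U = V" if "U \<in> \<F>" "V \<in> \<F>" "c \<in> U" "c \<in> V" for c U V
      using disj that unfolding pairwise_def disjnt_def by blast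
  qed fact
qed

context Metric_space
begin

lemma separable_imp_second_countable:
  assumes "separable_space mtopology" shows "second_countable mtopology"
proof -
  obtain C where C: "countable C" "\<forall>T. openin mtopology T \<and> T \<noteq> {} \<longrightarrow> C \<inter> T \<noteq> {}"
    using assms unfolding separable_space_def dense_intersects_open by blast
  define \<B> where "\<B> = (\<lambda>(c, r). mball c r) ` (C \<times> {r \<in> \<rat>. 0 < r})"
  have "countable {r::real \<in> \<rat>. 0 < r}"
    by (rule countable_subset[OF _ countable_rat]) auto
  then have "countable \<B>" unfolding \<B>_def using C(1) by auto
  moreover have "\<forall>V\<in>\<B>. openin mtopology V" unfolding \<B>_def by auto
  moreover have "\<exists>V\<in>\<B>. x \<in> V \<and> V \<subseteq> U" if U: "openin mtopology U" "x \<in> U" for U x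
  proof -
    obtain e where e: "e > 0" "mball x e \<subseteq> U"
      using U openin_mtopology by blast
    have x: "x \<in> M" using U openin_mtopology by blast
    obtain r where r: "r \<in> \<rat>" "0 < r" "r < e/2" using Rats_dense_in_real[of 0 "e/2"] e by auto
    have "mball x r \<noteq> {}" using x r by (simp add: mball_eq_empty)
    then obtain c where c: "c \<in> C" "c \<in> mball x r"
      using C(2) openin_mball by blast
    have "mball c r \<in> \<B>" unfolding \<B>_def using c r by auto
    moreover have "x \<in> mball c r" using c x by (auto simp: commute)
    moreover have "mball c r \<subseteq> mball x e"
      using c r by (intro mball_subset) (auto simp: commute)
    ultimately show ?thesis using e by blast
  qed
  ultimately show ?thesis unfolding second_countable_def by blast
qed

lemma maximal_separated_subset:
  assumes "0 < e"
  obtains D where "D \<subseteq> M" "\<And>a b. a \<in> D \<Longrightarrow> b \<in> D \<Longrightarrow> a \<noteq> b \<Longrightarrow> e \<le> d a b"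
    "\<And>x. x \<in> M \<Longrightarrow> \<exists>a\<in>D. d x a < e"
proof -
  define \<A> where "\<A> = {D. D \<subseteq> M \<and> (\<forall>a\<in>D. \<forall>b\<in>D. a \<noteq> b \<longrightarrow> e \<le> d a b)}"
  have "\<forall>\<C>\<in>chains \<A>. \<Union>\<C> \<in> \<A>"
  proof
    fix \<C> assume "\<C> \<in> chains \<A>"
    then have sub: "\<C> \<subseteq> \<A>" and chain: "\<forall>D\<in>\<C>. \<forall>D'\<in>\<C>. D \<subseteq> D' \<or> D' \<subseteq> D"
      by (auto simp: chains_def chain_subset_def)
    have "e \<le> d a b" if ab: "a \<in> \<Union>\<C>" "b \<in> \<Union>\<C>" "a \<noteq> b" for a b
    proof -
      obtain D D' where "D \<in> \<C>" "D' \<in> \<C>" "a \<in> D" "b \<in> D'" using ab by blast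
      then obtain D'' where "D'' \<in> \<C>" "a \<in> D''" "b \<in> D''" using chain by blast
      then show ?thesis using sub \<open>a \<noteq> b\<close> unfolding \<A>_def by blast
    qed
    moreover have "\<Union>\<C> \<subseteq> M" using sub unfolding \<A>_def by blast
    ultimately show "\<Union>\<C> \<in> \<A>" unfolding \<A>_def by blast
  qed
  then obtain D where D: "D \<in> \<A>" and max: "\<forall>D'\<in>\<A>. D \<subseteq> D' \<longrightarrow> D' = D"
    by (rule Zorn_Lemma[THEN bexE])
  have near: "\<exists>a\<in>D. d x a < e" if x: "x \<in> M" for x
  proof (rule ccontr)
    assume far: "\<not> (\<exists>a\<in>D. d x a < e)"
    then have "insert x D \<in> \<A>" using D x unfolding \<A>_def by (auto simp: commute not_less)
    then have "x \<in> D" using max by blast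
    then show False using far x assms by force
  qed
  from D have "D \<subseteq> M" "\<And>a b. a \<in> D \<Longrightarrow> b \<in> D \<Longrightarrow> a \<noteq> b \<Longrightarrow> e \<le> d a b"
    unfolding \<A>_def by auto
  then show thesis using near by (rule that)
qed

lemma ccc_imp_countable_separated:
  assumes "ccc_space mtopology" "0 < e" "D \<subseteq> M"
    and sep: "\<And>a b. a \<in> D \<Longrightarrow> b \<in> D \<Longrightarrow> a \<noteq> b \<Longrightarrow> e \<le> d a b"
  shows "countable D"
proof -
  have disj: "disjnt (mball a (e/2)) (mball b (e/2))" if "a \<in> D" "b \<in> D" "a \<noteq> b" for a b
    using sep[OF that] by (intro disjoint_mball) simp
  have "pairwise disjnt ((\<lambda>a. mball a (e/2)) ` D)"
    using disj by (intro pairwise_imageI) blast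
  then have "countable ((\<lambda>a. mball a (e/2)) ` D)"
    by (rule ccc_spaceD[OF assms(1), rotated]) auto
  moreover have "inj_on (\<lambda>a. mball a (e/2)) D"
  proof (rule inj_onI)
    fix a b assume ab: "a \<in> D" "b \<in> D" "mball a (e/2) = mball b (e/2)"
    have "a \<in> mball a (e/2)" using ab(1) assms(2,3) by auto
    then show "a = b" using disj[OF ab(1,2)] ab(3) unfolding disjnt_def by blast
  qed
  ultimately show ?thesis by (rule countable_image_inj_on)
qed

lemma ccc_imp_separable:
  assumes "ccc_space mtopology" shows "separable_space mtopology"
proof -
  have "\<forall>n. \<exists>D. D \<subseteq> M \<and> countable D \<and> (\<forall>x\<in>M. \<exists>a\<in>D. d x a < inverse (Suc n))"
  proof
    fix n
    have e: "0 < inverse (real (Suc n))" by simp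
    obtain D where D: "D \<subseteq> M" "\<And>a b. a \<in> D \<Longrightarrow> b \<in> D \<Longrightarrow> a \<noteq> b \<Longrightarrow> inverse (Suc n) \<le> d a b"
      "\<And>x. x \<in> M \<Longrightarrow> \<exists>a\<in>D. d x a < inverse (Suc n)"
      by (rule maximal_separated_subset[OF e]) (rule that)
    have "countable D" using ccc_imp_countable_separated[OF assms e D(1,2)] .
    then show "\<exists>D. D \<subseteq> M \<and> countable D \<and> (\<forall>x\<in>M. \<exists>a\<in>D. d x a < inverse (Suc n))"
      using D(1,3) by blast
  qed
  then obtain D where D: "\<forall>n. D n \<subseteq> M \<and> countable (D n) \<and> (\<forall>x\<in>M. \<exists>a\<in>D n. d x a < inverse (Suc n))"
    by (rule choice[THEN exE])
  have "\<forall>T. openin mtopology T \<and> T \<noteq> {} \<longrightarrow> (\<Union>n. D n) \<inter> T \<noteq> {}"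
  proof (intro allI impI)
    fix T assume T: "openin mtopology T \<and> T \<noteq> {}"
    then obtain x where "x \<in> T" by blast
    have balls: "T \<subseteq> M" "\<forall>x\<in>T. \<exists>r>0. mball x r \<subseteq> T"
      using T[THEN conjunct1] unfolding openin_mtopology by blast+
    then have "x \<in> M" using \<open>x \<in> T\<close> by blast
    obtain e where "e > 0" "mball x e \<subseteq> T" using balls(2) \<open>x \<in> T\<close> by blast
    obtain n where "inverse (Suc n) < e" using reals_Archimedean \<open>e > 0\<close> by blast
    obtain a where "a \<in> D n" "d x a < inverse (Suc n)" using D \<open>x \<in> M\<close> by blast
    moreover have "a \<in> M" using D \<open>a \<in> D n\<close> by blast
    ultimately have "a \<in> mball x e" using \<open>x \<in> M\<close> \<open>inverse (Suc n) < e\<close> by simp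
    then show "(\<Union>n. D n) \<inter> T \<noteq> {}" using \<open>a \<in> D n\<close> \<open>mball x e \<subseteq> T\<close> by blast
  qed
  moreover have "countable (\<Union>n. D n)" using D by simp
  moreover have "(\<Union>n. D n) \<subseteq> topspace mtopology" using D by auto
  ultimately show ?thesis unfolding separable_space_def dense_intersects_open
    by (intro exI[of _ "\<Union>n. D n"] conjI)
qed

end

section \<open>The countable sup property of \<open>C(X)\<close>\<close>

lemma cont_funs_extend_by_zero:
  assumes "continuous_map X euclideanreal \<phi>"
  shows "(\<lambda>x. if x \<in> topspace X then \<phi> x else 0) \<in> cont_funs X"
proof -
  have "continuous_map X euclideanreal (\<lambda>x. if x \<in> topspace X then \<phi> x else 0)"
    using assms by (rule continuous_map_eq) simp
  then show ?thesis unfolding cont_funs_def by simp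
qed

lemma indicator_topspace_in_cont_funs: "(indicator (topspace X) :: 'a \<Rightarrow> real) \<in> cont_funs X"
  using cont_funs_extend_by_zero[of X "\<lambda>_. 1"] by (simp add: indicator_def[abs_def] of_bool_def)

lemma le_cont_funs_iff:
  assumes "f \<in> cont_funs X" "g \<in> cont_funs X"
  shows "f \<le> g \<longleftrightarrow> (\<forall>x\<in>topspace X. f x \<le> g x)"
proof
  show "\<forall>x\<in>topspace X. f x \<le> g x" if "f \<le> g" using that by (simp add: le_fun_def)
  show "f \<le> g" if "\<forall>x\<in>topspace X. f x \<le> g x"
  proof (rule le_funI)
    fix x show "f x \<le> g x" using that assms by (cases "x \<in> topspace X") (auto simp: cont_funs_def)
  qed
qed

lemma second_countable_countable_dominating_subset:
  assumes "second_countable X" "A \<subseteq> cont_funs X"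
  obtains B where "B \<subseteq> A" "countable B"
    "\<And>g. g \<in> cont_funs X \<Longrightarrow> \<forall>f\<in>B. f \<le> g \<Longrightarrow> \<forall>f\<in>A. f \<le> g"
proof -
  obtain \<B> where "countable \<B>" and open_\<B>: "\<forall>V\<in>\<B>. openin X V"
    and basis: "\<And>U x. openin X U \<Longrightarrow> x \<in> U \<Longrightarrow> \<exists>V\<in>\<B>. x \<in> V \<and> V \<subseteq> U"
    using assms(1) unfolding second_countable_def by metis
  define exceeds where "exceeds V q f \<longleftrightarrow> f \<in> A \<and> (\<exists>y\<in>V. q < f y)"
    for V and q :: real and f :: "'a \<Rightarrow> real"
  define pick where "pick = (\<lambda>(V, q). SOME f. exceeds V q f)"
  define B where "B = pick ` {(V, q) \<in> \<B> \<times> \<rat>. \<exists>f. exceeds V q f}"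
  have pick: "exceeds V q (pick (V, q))" if "exceeds V q f" for V q f
    unfolding pick_def using that by (simp add: someI)
  have "pick (V, q) \<in> A" if "\<exists>f. exceeds V q f" for V q
    using that pick unfolding exceeds_def by blast
  then have "B \<subseteq> A" unfolding B_def by auto
  moreover have "countable B"
  proof -
    have "countable (\<B> \<times> (\<rat> :: real set))"
      using \<open>countable \<B>\<close> countable_rat by (rule countable_SIGMA)
    then have "countable {(V, q) \<in> \<B> \<times> \<rat>. \<exists>f. exceeds V q f}"
      by (rule countable_subset[rotated]) auto
    then show ?thesis unfolding B_def by (rule countable_image)
  qed
  moreover have "\<forall>f\<in>A. f \<le> g" if g: "g \<in> cont_funs X" and dominates: "\<forall>f\<in>B. f \<le> g" for g
  proof
    fix f assume "f \<in> A"
    then have f: "f \<in> cont_funs X" using assms(2) by blast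
    have "f x \<le> g x" if x: "x \<in> topspace X" for x
    proof (rule ccontr)
      assume "\<not> f x \<le> g x"
      then obtain q where q: "q \<in> \<rat>" "g x < q" "q < f x"
        using Rats_dense_in_real[of "g x" "f x"] by auto
      define W where "W = {y \<in> topspace X. q < f y} \<inter> {y \<in> topspace X. g y < q}"
      have "openin X {y \<in> topspace X. f y \<in> {q<..}}"
        using f unfolding cont_funs_def by (intro openin_continuous_map_preimage) auto
      moreover have "openin X {y \<in> topspace X. g y \<in> {..<q}}"
        using g unfolding cont_funs_def by (intro openin_continuous_map_preimage) auto
      ultimately have "openin X W" unfolding W_def by (simp add: openin_Int)
      then obtain V where V: "V \<in> \<B>" "x \<in> V" "V \<subseteq> W" using basis x q unfolding W_def by blast
      then have "exceeds V q f" using \<open>f \<in> A\<close> q unfolding exceeds_def W_def by blast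
      then have "(V, q) \<in> {(V, q) \<in> \<B> \<times> \<rat>. \<exists>f. exceeds V q f}" using V(1) q(1) by blast
      then have "pick (V, q) \<in> B" unfolding B_def by (rule imageI)
      then have "pick (V, q) \<le> g" by (rule dominates[rule_format])
      obtain y where "y \<in> V" "q < pick (V, q) y"
        using pick[OF \<open>exceeds V q f\<close>] unfolding exceeds_def by auto
      have "pick (V, q) y \<le> g y" using \<open>pick (V, q) \<le> g\<close> by (rule le_funD)
      moreover have "g y < q" using \<open>y \<in> V\<close> V(3) unfolding W_def by blast
      ultimately show False using \<open>q < pick (V, q) y\<close> by linarith
    qed
    then show "f \<le> g" using le_cont_funs_iff[OF f g] by blast
  qed
  ultimately show thesis by (rule that)
qed

lemma second_countable_imp_countable_sup_property:
  assumes "second_countable X" shows "countable_sup_property X"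
  unfolding countable_sup_property_def
proof (intro allI impI, elim conjE)
  fix A s assume A: "A \<subseteq> cont_funs X" and sup: "is_sup_in_C X A s"
  obtain B where B: "B \<subseteq> A" "countable B"
    and dominating: "\<And>g. g \<in> cont_funs X \<Longrightarrow> \<forall>f\<in>B. f \<le> g \<Longrightarrow> \<forall>f\<in>A. f \<le> g"
    by (rule second_countable_countable_dominating_subset[OF assms A]) (rule that)
  have "is_sup_in_C X B s"
    unfolding is_sup_in_C_def
  proof (intro conjI ballI impI)
    show "s \<in> cont_funs X" using sup unfolding is_sup_in_C_def by (rule conjunct1)
    show "f \<le> s" if "f \<in> B" for f
      using sup \<open>B \<subseteq> A\<close> that unfolding is_sup_in_C_def by auto
    show "s \<le> g" if "g \<in> cont_funs X" "\<forall>f\<in>B. f \<le> g" for g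
      using sup dominating[OF that] that(1) unfolding is_sup_in_C_def by auto
  qed
  then show "\<exists>B\<subseteq>A. countable B \<and> is_sup_in_C X B s" using B by auto
qed

lemma completely_regular_bump:
  assumes "completely_regular_space X" "openin X U" "x \<in> U"
  obtains h where "h \<in> cont_funs X" "\<And>y. 0 \<le> h y" "\<And>y. h y \<le> 1" "h x = 1"
    "\<And>y. h y \<noteq> 0 \<Longrightarrow> y \<in> U"
proof -
  have "closedin X (topspace X - U)" "x \<in> topspace X - (topspace X - U)"
    using assms(2,3) openin_subset by fastforce+
  then obtain f :: "'a \<Rightarrow> real" where f: "continuous_map X (top_of_set {0..1}) f"
    "f x = 0" "f ` (topspace X - U) \<subseteq> {1}"
    using assms(1) unfolding completely_regular_space_def by blast
  have f01: "f y \<in> {0..1}" if "y \<in> topspace X" for y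
    using continuous_map_image_subset_topspace[OF f(1)] that by auto
  have "continuous_map X euclideanreal f"
    using f(1) continuous_map_in_subtopology by blast
  then have "continuous_map X euclideanreal (\<lambda>y. 1 - f y)"
    by (intro continuous_intros) auto
  define h where "h y = (if y \<in> topspace X then 1 - f y else 0)" for y
  have "h \<in> cont_funs X"
    unfolding h_def by (rule cont_funs_extend_by_zero) fact
  moreover have "0 \<le> h y" "h y \<le> 1" for y
    using f01[of y] unfolding h_def by auto
  moreover have "h x = 1"
    using f(2) assms(2,3) openin_subset unfolding h_def by fastforce
  moreover have "y \<in> U" if "h y \<noteq> 0" for y
  proof (rule ccontr)
    assume "y \<notin> U"
    moreover have "y \<in> topspace X" using that unfolding h_def by presburger
    ultimately have "f y = 1" using f(3) by blast
    then show False using that \<open>y \<in> topspace X\<close> unfolding h_def by simp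
  qed
  ultimately show thesis by (rule that)
qed

definition subordinate_bumps :: "'a topology \<Rightarrow> 'a set set \<Rightarrow> ('a \<Rightarrow> real) set" where
  "subordinate_bumps X \<U> =
     {f \<in> cont_funs X. (\<forall>x. 0 \<le> f x \<and> f x \<le> 1) \<and> (\<exists>U\<in>\<U>. \<forall>x. f x \<noteq> 0 \<longrightarrow> x \<in> U)}"

lemma is_sup_in_C_subordinate_bumps:
  assumes "completely_regular_space X" "\<And>U. U \<in> \<U> \<Longrightarrow> openin X U"
    and dense: "\<And>T. openin X T \<Longrightarrow> T \<noteq> {} \<Longrightarrow> \<Union>\<U> \<inter> T \<noteq> {}"
  shows "is_sup_in_C X (subordinate_bumps X \<U>) (indicator (topspace X))"
  unfolding is_sup_in_C_def
proof (intro conjI ballI impI)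
  show one: "indicator (topspace X) \<in> cont_funs X" by (rule indicator_topspace_in_cont_funs)
  show "f \<le> indicator (topspace X)" if "f \<in> subordinate_bumps X \<U>" for f
    using that by (auto simp: subordinate_bumps_def le_cont_funs_iff[OF _ one])
  fix g assume g: "g \<in> cont_funs X" and ub: "\<forall>f\<in>subordinate_bumps X \<U>. f \<le> g"
  have "1 \<le> g x" if x: "x \<in> topspace X" for x
  proof (rule ccontr)
    assume "\<not> 1 \<le> g x"
    define W where "W = {y \<in> topspace X. g y \<in> {..<1}}"
    have "openin X W"
      using g unfolding W_def cont_funs_def by (intro openin_continuous_map_preimage) auto
    moreover have "W \<noteq> {}" using x \<open>\<not> 1 \<le> g x\<close> unfolding W_def by auto
    ultimately obtain U y where "U \<in> \<U>" "y \<in> U" "y \<in> W" using dense by blast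
    then obtain h where h: "h \<in> cont_funs X" "\<And>y. 0 \<le> h y" "\<And>y. h y \<le> 1" "h y = 1"
      "\<And>z. h z \<noteq> 0 \<Longrightarrow> z \<in> U"
      using completely_regular_bump[OF assms(1) assms(2)] by metis
    then have "h \<in> subordinate_bumps X \<U>"
      unfolding subordinate_bumps_def using \<open>U \<in> \<U>\<close> by blast
    then have "h y \<le> g y" using ub by (simp add: le_fun_def)
    then show False using h(4) \<open>y \<in> W\<close> unfolding W_def by simp
  qed
  then show "indicator (topspace X) \<le> g" using le_cont_funs_iff[OF one g] by simp
qed

lemma sup_indicator_support_meets_open:
  assumes "completely_regular_space X" "B \<subseteq> subordinate_bumps X \<U>"
    and sup: "is_sup_in_C X B (indicator (topspace X))"
    and "openin X V" "x \<in> V"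
  shows "\<exists>f\<in>B. \<exists>y\<in>V. f y \<noteq> 0"
proof -
  obtain h where h: "h \<in> cont_funs X" "\<And>y. 0 \<le> h y" "\<And>y. h y \<le> 1" "h x = 1"
    "\<And>y. h y \<noteq> 0 \<Longrightarrow> y \<in> V"
    using completely_regular_bump[OF assms(1,4,5)] by metis
  define g where "g y = (if y \<in> topspace X then 1 - h y else 0)" for y
  have "continuous_map X euclideanreal (\<lambda>y. 1 - h y)"
    using h(1) unfolding cont_funs_def by (intro continuous_intros) auto
  then have g: "g \<in> cont_funs X" unfolding g_def by (rule cont_funs_extend_by_zero)
  have x: "x \<in> topspace X" using assms(4,5) openin_subset by blast
  have "\<not> indicator (topspace X) \<le> g"
    using le_cont_funs_iff[OF indicator_topspace_in_cont_funs g] x h(4) by (auto simp: g_def)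
  then obtain f where "f \<in> B" "\<not> f \<le> g" using sup g unfolding is_sup_in_C_def by blast
  moreover have f: "f \<in> cont_funs X" "\<And>y. f y \<le> 1"
    using \<open>f \<in> B\<close> assms(2) unfolding subordinate_bumps_def by auto
  ultimately have "\<not> (\<forall>y\<in>topspace X. f y \<le> g y)" using le_cont_funs_iff[OF f(1) g] by simp
  then obtain y where y: "y \<in> topspace X" "\<not> f y \<le> g y" by blast
  then have "h y \<noteq> 0" "f y \<noteq> 0" using f(2)[of y] h(2,3)[of y] unfolding g_def by auto
  then show ?thesis using h(5) \<open>f \<in> B\<close> by blast
qed

lemma dense_Union_insert_interior_complement:
  assumes "openin X T" "T \<noteq> {}"
  shows "\<Union>(insert (X interior_of (topspace X - \<Union>\<F>)) \<F>) \<inter> T \<noteq> {}"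
proof
  assume "\<Union>(insert (X interior_of (topspace X - \<Union>\<F>)) \<F>) \<inter> T = {}"
  then have "T \<subseteq> topspace X - \<Union>\<F>" "T \<inter> X interior_of (topspace X - \<Union>\<F>) = {}"
    using openin_subset[OF assms(1)] by auto
  moreover have "T \<subseteq> X interior_of (topspace X - \<Union>\<F>)"
    using calculation(1) assms(1) by (rule interior_of_maximal)
  ultimately show False using assms(2) by blast
qed

lemma countable_sup_property_imp_ccc_space:
  assumes cr: "completely_regular_space X" and csp: "countable_sup_property X"
  shows "ccc_space X"
  unfolding ccc_space_def
proof (intro allI impI, elim conjE)
  fix \<F> assume open_\<F>: "\<forall>U\<in>\<F>. openin X U" and disj: "pairwise disjnt \<F>"
  define N where "N = X interior_of (topspace X - \<Union>\<F>)"
  define \<U> where "\<U> = insert N \<F>"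
  have open_\<U>: "openin X U" if "U \<in> \<U>" for U
    using that open_\<F> unfolding \<U>_def N_def by auto
  have "disjnt N U" if "U \<in> \<F>" for U
    using interior_of_subset[of X "topspace X - \<Union>\<F>"] that unfolding N_def disjnt_def by blast
  then have "pairwise disjnt \<U>"
    unfolding \<U>_def using disj by (auto simp: pairwise_insert disjnt_sym)
  then have same: "U = U'" if "U \<in> \<U>" "U' \<in> \<U>" "y \<in> U" "y \<in> U'" for U U' y
    using that unfolding pairwise_def disjnt_def by blast
  have "(\<lambda>_. 0) \<in> subordinate_bumps X \<U>"
    unfolding subordinate_bumps_def cont_funs_def \<U>_def by auto
  then have "subordinate_bumps X \<U> \<noteq> {}" by blast
  moreover have "subordinate_bumps X \<U> \<subseteq> cont_funs X" unfolding subordinate_bumps_def by blast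
  moreover have "is_sup_in_C X (subordinate_bumps X \<U>) (indicator (topspace X))"
    using cr open_\<U> dense_Union_insert_interior_complement unfolding \<U>_def N_def
    by (rule is_sup_in_C_subordinate_bumps)
  ultimately obtain B where B: "B \<subseteq> subordinate_bumps X \<U>" "countable B"
    and sup: "is_sup_in_C X B (indicator (topspace X))"
    using csp unfolding countable_sup_property_def by blast
  show "countable \<F>"
  proof (rule countable_family_with_unique_witnesses[OF \<open>countable B\<close>])
    show "\<exists>f\<in>B. \<exists>y\<in>U. f y \<noteq> 0" if "U \<in> \<F>" "U \<noteq> {}" for U
      using that open_\<F> sup_indicator_support_meets_open[OF cr B(1) sup] by blast
    show "U = V" if f: "f \<in> B" and UV: "U \<in> \<F>" "V \<in> \<F>" "\<exists>y\<in>U. f y \<noteq> 0" "\<exists>y\<in>V. f y \<noteq> 0"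
      for f U V
    proof -
      obtain W where W: "W \<in> \<U>" "\<And>x. f x \<noteq> 0 \<Longrightarrow> x \<in> W"
        using f B(1) unfolding subordinate_bumps_def by blast
      obtain y z where "y \<in> U" "f y \<noteq> 0" "z \<in> V" "f z \<noteq> 0" using UV(3,4) by blast
      moreover have "U \<in> \<U>" "V \<in> \<U>" using UV(1,2) unfolding \<U>_def by blast+
      ultimately have "U = W" "V = W" using same W by metis+
      then show ?thesis by simp
    qed
  qed
qed

section \<open>Topological groups\<close>

context
  fixes G :: "('a, 'b) monoid_scheme" (structure) and X :: "'a topology"
  assumes tg: "topological_group G X"
begin

interpretation group G using tg unfolding topological_group_def by blast

lemma carrier_eq_topspace: "carrier G = topspace X"
  using tg unfolding topological_group_def by blast

lemma continuous_map_right_translation: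
  assumes "s \<in> carrier G" shows "continuous_map X X (\<lambda>u. u \<otimes> s)"
proof -
  have "continuous_map X (prod_topology X X) (\<lambda>u. (u, s))"
    using assms carrier_eq_topspace by (intro continuous_map_pairedI) auto
  then have "continuous_map X X ((\<lambda>(x, y). x \<otimes> y) \<circ> (\<lambda>u. (u, s)))"
    using tg unfolding topological_group_def by (intro continuous_map_compose) auto
  then show ?thesis by (simp add: o_def)
qed

lemma right_translation_image_eq:
  assumes "U \<subseteq> carrier G" "s \<in> carrier G"
  shows "(\<lambda>u. u \<otimes> s) ` U = {y \<in> topspace X. y \<otimes> inv s \<in> U}"
proof
  show "(\<lambda>u. u \<otimes> s) ` U \<subseteq> {y \<in> topspace X. y \<otimes> inv s \<in> U}"
  proof clarify
    fix u assume "u \<in> U"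
    then have "u \<in> carrier G" using assms(1) by blast
    then have "u \<otimes> s \<in> carrier G" "u \<otimes> s \<otimes> inv s = u"
      using assms(2) by (simp_all add: m_assoc)
    then show "u \<otimes> s \<in> topspace X \<and> u \<otimes> s \<otimes> inv s \<in> U"
      using \<open>u \<in> U\<close> carrier_eq_topspace by simp
  qed
  show "{y \<in> topspace X. y \<otimes> inv s \<in> U} \<subseteq> (\<lambda>u. u \<otimes> s) ` U"
  proof clarify
    fix y assume y: "y \<in> topspace X" "y \<otimes> inv s \<in> U"
    then have "y \<in> carrier G" using carrier_eq_topspace by simp
    then have "y = y \<otimes> inv s \<otimes> s" using assms(2) by (simp add: m_assoc)
    then show "y \<in> (\<lambda>u. u \<otimes> s) ` U" using y(2) by blast
  qed
qed

lemma openin_right_translation: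
  assumes "openin X U" "s \<in> carrier G"
  shows "openin X ((\<lambda>u. u \<otimes> s) ` U)"
proof -
  have "U \<subseteq> carrier G" using assms(1) carrier_eq_topspace openin_subset by blast
  moreover have "openin X {y \<in> topspace X. y \<otimes> inv s \<in> U}"
    using continuous_map_right_translation[of "inv s"] assms
    by (intro openin_continuous_map_preimage) auto
  ultimately show ?thesis using assms(2) by (simp add: right_translation_image_eq)
qed

lemma Lindelof_imp_aleph0_bounded:
  assumes "Lindelof_space X" shows "aleph0_bounded G X"
  unfolding aleph0_bounded_def
proof (intro allI impI, elim conjE)
  fix U assume U: "openin X U" "U \<noteq> {}"
  have U_carrier: "U \<subseteq> carrier G" using U(1) carrier_eq_topspace openin_subset by blast
  obtain u where "u \<in> U" using U(2) by blast
  then have u: "u \<in> carrier G" using U_carrier by blast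
  define T where "T s = (\<lambda>v. v \<otimes> s) ` U" for s
  have "topspace X \<subseteq> \<Union>(T ` carrier G)"
  proof
    fix g assume "g \<in> topspace X"
    then have g: "g \<in> carrier G" using carrier_eq_topspace by simp
    then have "g = u \<otimes> (inv u \<otimes> g)" using u by (simp add: m_assoc[symmetric])
    then have "g \<in> T (inv u \<otimes> g)" unfolding T_def using \<open>u \<in> U\<close> by blast
    moreover have "inv u \<otimes> g \<in> carrier G" using g u by simp
    ultimately show "g \<in> \<Union>(T ` carrier G)" by blast
  qed
  moreover have "\<forall>V\<in>T ` carrier G. openin X V"
    unfolding T_def using openin_right_translation U(1) by blast
  ultimately have "\<exists>\<V>. countable \<V> \<and> \<V> \<subseteq> T ` carrier G \<and> topspace X \<subseteq> \<Union>\<V>"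
    by (intro Lindelof_space_alt[THEN iffD1, OF assms, rule_format] conjI)
  then obtain S where S: "countable S" "S \<subseteq> carrier G" "topspace X \<subseteq> \<Union>(T ` S)"
    using countable_subset_image[of _ T "carrier G"] by metis
  have "T s \<subseteq> carrier G" if "s \<in> S" for s
    using that S(2) U_carrier unfolding T_def by auto
  then have "carrier G = (\<Union>s\<in>S. (\<lambda>u. u \<otimes> s) ` U)"
    using S(3) carrier_eq_topspace unfolding T_def by blast
  then show "\<exists>S. S \<subseteq> carrier G \<and> countable S \<and> carrier G = (\<Union>s\<in>S. (\<lambda>u. u \<otimes> s) ` U)"
    using S(1,2) by blast
qed

lemma first_countable_aleph0_bounded_imp_separable:
  assumes "first_countable X" "aleph0_bounded G X"
  shows "separable_space X"
proof -
  have "\<one> \<in> topspace X" using carrier_eq_topspace by auto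
  with assms(1) have "\<exists>\<B>. countable \<B> \<and> (\<forall>V\<in>\<B>. openin X V) \<and>
      (\<forall>U. openin X U \<and> \<one> \<in> U \<longrightarrow> (\<exists>V\<in>\<B>. \<one> \<in> V \<and> V \<subseteq> U))"
    unfolding first_countable_def by (rule bspec)
  then obtain \<B> where "countable \<B>" and open_\<B>: "\<forall>V\<in>\<B>. openin X V"
    and nhds: "\<forall>U. openin X U \<and> \<one> \<in> U \<longrightarrow> (\<exists>V\<in>\<B>. \<one> \<in> V \<and> V \<subseteq> U)"
    by blast
  define \<N> where "\<N> = {V \<in> \<B>. \<one> \<in> V}"
  have "\<forall>V\<in>\<N>. \<exists>S. S \<subseteq> carrier G \<and> countable S \<and> carrier G = (\<Union>s\<in>S. (\<lambda>u. u \<otimes> s) ` V)"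
    using assms(2) open_\<B> unfolding aleph0_bounded_def \<N>_def by blast
  then obtain S where S: "\<forall>V\<in>\<N>.
      S V \<subseteq> carrier G \<and> countable (S V) \<and> carrier G = (\<Union>s\<in>S V. (\<lambda>u. u \<otimes> s) ` V)"
    by (rule bchoice[THEN exE])
  define C where "C = (\<Union>V\<in>\<N>. S V)"
  have "countable \<N>" unfolding \<N>_def using \<open>countable \<B>\<close> by simp
  then have "countable C" unfolding C_def using S by (intro countable_UN) blast+
  moreover have "C \<subseteq> topspace X" unfolding C_def using S carrier_eq_topspace by blast
  moreover have "C \<inter> T \<noteq> {}" if T: "openin X T" "T \<noteq> {}" for T
  proof -
    obtain x where "x \<in> T" using T(2) by blast
    then have x: "x \<in> carrier G" using T(1) openin_subset carrier_eq_topspace by blast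
    define W where "W = {z \<in> topspace X. inv z \<otimes> x \<in> T}"
    have "continuous_map X X (\<lambda>z. inv z \<otimes> x)"
      using continuous_map_compose[OF _ continuous_map_right_translation[OF x]] tg
      unfolding topological_group_def by (auto simp: o_def)
    then have "openin X W" unfolding W_def using T(1) by (rule openin_continuous_map_preimage)
    moreover have "\<one> \<in> W" unfolding W_def using x \<open>x \<in> T\<close> carrier_eq_topspace by auto
    ultimately obtain V where V: "V \<in> \<N>" "V \<subseteq> W" using nhds unfolding \<N>_def by blast
    then obtain s v where sv: "s \<in> S V" "v \<in> V" "x = v \<otimes> s" using S x by blast
    have "s \<in> carrier G" using sv(1) S V(1) by blast
    have "v \<in> carrier G" using sv(2) V(2) carrier_eq_topspace unfolding W_def by blast
    then have "inv v \<otimes> x = s" using sv(3) \<open>s \<in> carrier G\<close> by (simp add: m_assoc[symmetric])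
    moreover have "inv v \<otimes> x \<in> T" using sv(2) V(2) unfolding W_def by blast
    moreover have "s \<in> C" unfolding C_def using sv(1) V(1) by blast
    ultimately show ?thesis by blast
  qed
  ultimately show ?thesis unfolding separable_space_def dense_intersects_open
    by (intro exI[of _ C] conjI allI impI) auto
qed

end

theorem theorem4p10:
  fixes G :: "('a, 'b) monoid_scheme" and X :: "'a topology"
  assumes "topological_group G X" and "metrizable_space X"
  shows "(separable_space X \<longleftrightarrow> ccc_space X) \<and>
         (ccc_space X \<longleftrightarrow> aleph0_bounded G X) \<and>
         (aleph0_bounded G X \<longleftrightarrow> countable_sup_property X)"
proof -
  obtain M d where "Metric_space M d" and X: "X = Metric_space.mtopology M d"
    using assms(2) unfolding metrizable_space_def by blast
  then have sep_sc: "separable_space X \<Longrightarrow> second_countable X"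
    and ccc_sep: "ccc_space X \<Longrightarrow> separable_space X"
    using Metric_space.separable_imp_second_countable Metric_space.ccc_imp_separable by blast+
  have "separable_space X \<Longrightarrow> aleph0_bounded G X"
    using Lindelof_imp_aleph0_bounded[OF assms(1)] second_countable_imp_Lindelof_space sep_sc by blast
  moreover have "aleph0_bounded G X \<Longrightarrow> separable_space X"
    using first_countable_aleph0_bounded_imp_separable[OF assms(1) metrizable_imp_first_countable[OF assms(2)]] .
  moreover have "separable_space X \<Longrightarrow> countable_sup_property X"
    using second_countable_imp_countable_sup_property sep_sc by blast
  moreover have "countable_sup_property X \<Longrightarrow> ccc_space X"
    using countable_sup_property_imp_ccc_space metrizable_imp_completely_regular_space[OF assms(2)] by blast
  ultimately show ?thesis using separable_imp_ccc_space ccc_sep by blast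
qed

end
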